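(* A family of structures $\mathfrak{K}=\{\mathcal{A}_i:i\in\mathbb{N}\}$ is $E_{range}$-learnable if and only if $\mathfrak{K}$ is a $\Sigma^{\mathrm{inf}}_1$-partial order, i.e., for all $i\neq j$, $\mathrm{Th}_{\Sigma^{\mathrm{inf}}_1}(\mathcal{A}_i)\neq\mathrm{Th}_{\Sigma^{\mathrm{inf}}_1}(\mathcal{A}_j)$.
   Context: All structures are countable, have domain $\mathbb{N}$, are in a finite relational signature, and are identified with their atomic diagrams (elements of $2^{\mathbb{N}}$). A family of structures is a countable set of pairwise nonisomorphic such structures. $\mathrm{LD}(\mathfrak{K})\subseteq 2^{\mathbb{N}}$ is the set of structures with domain $\mathbb{N}$ isomorphic to a member of $\mathfrak{K}$ (subspace topology). For an equivalence relation $E$ on a space $X$, $\mathfrak{K}$ is $E$-learnable if there is a continuous $\Gamma:\mathrm{LD}(\mathfrak{K})\to X$ with $\mathcal{S}\cong\mathcal{S}'\iff\Gamma(\mathcal{S})\,E\,\Gamma(\mathcal{S}')$ for all $\mathcal{S},\mathcal{S}'\in\mathrm{LD}(\mathfrak{K})$. $E_{range}$ is the equivalence relation on Baire space $\mathbb{N}^{\mathbb{N}}$ given by $p\,E_{range}\,q\iff\{p(m):m\in\mathbb{N}\}=\{q(m):m\in\mathbb{N}\}$. $\mathrm{Th}_{\Sigma^{\mathrm{inf}}_1}(\mathcal{A})$ is the set of $\Sigma^{\mathrm{inf}}_1$ sentences of $\mathcal{L}_{\omega_1\omega}$ true in $\mathcal{A}$, where a $\Sigma^{\mathrm{inf}}_1$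 formula is a countable disjunction $\bigvee_i\exists\bar y_i\,\psi_i(\bar x,\bar y_i)$ with each $\psi_i$ finitary quantifier-free. *)

theory Defs
  imports "HOL-Analysis.Analysis"
begin

text \<open>A finite relational signature is a list of arities: symbol k (k < length sig)
  has arity sig ! k.  A structure with domain nat is given by its relations:
  S k xs holds iff the k-th relation holds of the tuple xs.  The space of all
  such objects, with the product topology on nat => nat list => bool (bool
  discrete), is the Cantor space of atomic diagrams.\<close>

type_synonym struc = "nat \<Rightarrow> nat list \<Rightarrow> bool"

definition is_struc :: "nat list \<Rightarrow> struc \<Rightarrow> bool" where
  "is_struc sig S \<longleftrightarrow> (\<forall>k xs. S k xs \<longrightarrow> k < length sig \<and> length xs = sig ! k)"

definition iso :: "struc \<Rightarrow> struc \<Rightarrow> bool" where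
  "iso S T \<longleftrightarrow> (\<exists>f. bij f \<and> (\<forall>k xs. S k xs \<longleftrightarrow> T k (map f xs)))"

datatype qf = QTrue | QEq nat nat | QRel nat "nat list" | QNot qf | QAnd qf qf | QOr qf qf

fun wf_qf :: "nat list \<Rightarrow> qf \<Rightarrow> bool" where
  "wf_qf sig QTrue = True"
| "wf_qf sig (QEq i j) = True"
| "wf_qf sig (QRel k vs) = (k < length sig \<and> length vs = sig ! k)"
| "wf_qf sig (QNot p) = wf_qf sig p"
| "wf_qf sig (QAnd p q) = (wf_qf sig p \<and> wf_qf sig q)"
| "wf_qf sig (QOr p q) = (wf_qf sig p \<and> wf_qf sig q)"

fun eval_qf :: "struc \<Rightarrow> (nat \<Rightarrow> nat) \<Rightarrow> qf \<Rightarrow> bool" where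
  "eval_qf S v QTrue = True"
| "eval_qf S v (QEq i j) = (v i = v j)"
| "eval_qf S v (QRel k vs) = S k (map v vs)"
| "eval_qf S v (QNot p) = (\<not> eval_qf S v p)"
| "eval_qf S v (QAnd p q) = (eval_qf S v p \<and> eval_qf S v q)"
| "eval_qf S v (QOr p q) = (eval_qf S v p \<or> eval_qf S v q)"

text \<open>A Sigma^inf_1 sentence is a countable disjunction of sentences
  \<exists>y. psi(y) with psi finitary quantifier-free; it is represented by the
  (necessarily countable, as qf is a countable type) set of its disjuncts psi,
  all of whose variables are existentially bound.\<close>
definition sigma1_sentences :: "nat list \<Rightarrow> qf set set" where
  "sigma1_sentences sig = {\<Phi>. countable \<Phi> \<and> (\<forall>\<psi>\<in>\<Phi>. wf_qf sig \<psi>)}"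

definition sat_sigma1 :: "struc \<Rightarrow> qf set \<Rightarrow> bool" where
  "sat_sigma1 S \<Phi> \<longleftrightarrow> (\<exists>\<psi>\<in>\<Phi>. \<exists>v. eval_qf S v \<psi>)"

definition Th_sigma1 :: "nat list \<Rightarrow> struc \<Rightarrow> qf set set" where
  "Th_sigma1 sig S = {\<Phi> \<in> sigma1_sentences sig. sat_sigma1 S \<Phi>}"

definition LD :: "nat list \<Rightarrow> (nat \<Rightarrow> struc) \<Rightarrow> struc set" where
  "LD sig A = {S. is_struc sig S \<and> (\<exists>i. iso S (A i))}"

definition E_range :: "(nat \<Rightarrow> nat) \<Rightarrow> (nat \<Rightarrow> nat) \<Rightarrow> bool" where
  "E_range p q \<longleftrightarrow> range p = range q"

definition E_learnable ::
  "('x::topological_space \<Rightarrow> 'x \<Rightarrow> bool) \<Rightarrow> nat list \<Rightarrow> (nat \<Rightarrow> struc) \<Rightarrow> bool" where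
  "E_learnable E sig A \<longleftrightarrow> (\<exists>\<Gamma> :: struc \<Rightarrow> 'x. continuous_on (LD sig A) \<Gamma> \<and>
     (\<forall>S\<in>LD sig A. \<forall>T\<in>LD sig A. iso S T \<longleftrightarrow> E (\<Gamma> S) (\<Gamma> T)))"

definition is_family :: "nat list \<Rightarrow> (nat \<Rightarrow> struc) \<Rightarrow> bool" where
  "is_family sig A \<longleftrightarrow> (\<forall>i. is_struc sig (A i)) \<and> (\<forall>i j. i \<noteq> j \<longrightarrow> \<not> iso (A i) (A j))"

end

theory Submission
  imports Defs "HOL-Library.Countable" "HOL-Library.More_List"
begin

text \<open>
  If the \<open>\<Sigma>\<^sup>inf\<^sub>1\<close> theories are pairwise distinct, a structure is identified up to
  isomorphism by the set of finitary quantifier-free formulas it satisfies under some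
  assignment; a learner continuously enumerates the codes of these formulas by testing
  all pairs of a formula and a finite assignment.

  Conversely, if \<open>Th(\<A>\<^sub>i) \<subseteq> Th(\<A>\<^sub>j)\<close>, then for every \<open>n\<close> the diagram of \<open>\<A>\<^sub>i\<close> on
  \<open>{0..<n}\<close> is realised in \<open>\<A>\<^sub>j\<close>, so copies of \<open>\<A>\<^sub>j\<close> converge to \<open>\<A>\<^sub>i\<close>. Every
  value in the range of a continuous \<open>E\<^sub>r\<^sub>a\<^sub>n\<^sub>g\<^sub>e\<close>-learner at \<open>\<A>\<^sub>i\<close> is then already
  produced on one of these copies, hence lies in its range at \<open>\<A>\<^sub>j\<close>. Equal theories thus
  force equal ranges, i.e. isomorphic structures.
\<close>

instance qf :: countable by countable_datatype

lemma iso_refl: "iso S S"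
  unfolding iso_def by (rule exI[of _ id]) simp

lemma iso_sym:
  assumes "iso S T"
  shows "iso T S"
proof -
  obtain f where f: "bij f" "\<And>k xs. S k xs \<longleftrightarrow> T k (map f xs)"
    using assms unfolding iso_def by blast
  have "T k xs \<longleftrightarrow> S k (map (inv f) xs)" for k xs
    using f(2)[of k "map (inv f) xs"] f(1) by (simp add: bij_is_surj surj_f_inv_f comp_def)
  with bij_imp_bij_inv[OF f(1)] show ?thesis unfolding iso_def by blast
qed

lemma iso_trans:
  assumes "iso S T" "iso T U"
  shows "iso S U"
proof -
  obtain f where f: "bij f" "\<And>k xs. S k xs \<longleftrightarrow> T k (map f xs)"
    using assms(1) unfolding iso_def by blast
  obtain g where g: "bij g" "\<And>k xs. T k xs \<longleftrightarrow> U k (map g xs)"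
    using assms(2) unfolding iso_def by blast
  have "S k xs \<longleftrightarrow> U k (map (g \<circ> f) xs)" for k xs
    using f g by simp
  with bij_comp[OF f(1) g(1)] show ?thesis unfolding iso_def by blast
qed

lemma eval_qf_rename:
  assumes "inj f" "\<And>k xs. S k xs \<longleftrightarrow> T k (map f xs)"
  shows "eval_qf S v \<psi> = eval_qf T (f \<circ> v) \<psi>"
  by (induction \<psi>) (auto simp: assms(2) comp_def inj_eq[OF assms(1)])

definition satisfiable_qfs :: "struc \<Rightarrow> qf set" where
  "satisfiable_qfs S = {\<psi>. \<exists>v. eval_qf S v \<psi>}"

lemma satisfiable_qfs_iso:
  assumes "iso S T"
  shows "satisfiable_qfs S = satisfiable_qfs T"
proof -
  obtain f where f: "bij f" "\<And>k xs. S k xs \<longleftrightarrow> T k (map f xs)"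
    using assms unfolding iso_def by blast
  note rename = eval_qf_rename[of f S T, OF bij_is_inj[OF f(1)] f(2)]
  have "(\<exists>v. eval_qf S v \<psi>) \<longleftrightarrow> (\<exists>v. eval_qf T v \<psi>)" for \<psi>
  proof
    assume "\<exists>v. eval_qf T v \<psi>"
    then obtain v where "eval_qf T v \<psi>" by blast
    then have "eval_qf T (f \<circ> (inv f \<circ> v)) \<psi>"
      using f(1) by (simp add: comp_def bij_is_surj surj_f_inv_f)
    then show "\<exists>v. eval_qf S v \<psi>" using rename by blast
  qed (use rename in blast)
  then show ?thesis unfolding satisfiable_qfs_def by blast
qed

lemma Th_sigma1_satisfiable_qfs:
  "Th_sigma1 sig S = {\<Phi> \<in> sigma1_sentences sig. \<Phi> \<inter> satisfiable_qfs S \<noteq> {}}"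
  unfolding Th_sigma1_def sat_sigma1_def satisfiable_qfs_def by auto

subsection \<open>The space of structures\<close>

lemma tendsto_fun_iff:
  "((f :: 'c \<Rightarrow> 'a \<Rightarrow> 'b::topological_space) \<longlongrightarrow> l) F \<longleftrightarrow> (\<forall>i. ((\<lambda>c. f c i) \<longlongrightarrow> l i) F)"
proof -
  have "(f \<longlongrightarrow> l) F \<longleftrightarrow> limitin (product_topology (\<lambda>i. euclidean) UNIV) f l F"
    by (simp add: euclidean_product_topology)
  then show ?thesis by (simp add: limitin_componentwise)
qed

lemma range_subset_UN_range_if_tendsto:
  fixes f :: "nat \<Rightarrow> 'i \<Rightarrow> 'b::discrete_topology"
  assumes "(f \<longlongrightarrow> g) sequentially"
  shows "range g \<subseteq> (\<Union>n. range (f n))"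
proof
  fix x assume "x \<in> range g"
  then obtain m where x: "x = g m" by blast
  from assms have "\<forall>\<^sub>F n in sequentially. f n m = x"
    unfolding tendsto_fun_iff x by (simp add: tendsto_discrete)
  then obtain n where "f n m = x" unfolding eventually_sequentially by blast
  then show "x \<in> (\<Union>n. range (f n))" by blast
qed

lemma open_eval_qf: "open {S :: struc. eval_qf S v \<psi> = b}"
proof (induction \<psi> arbitrary: b)
  case (QRel k vs)
  have "continuous_on UNIV (\<lambda>S :: struc. S k (map v vs))"
    by (rule continuous_on_product_then_coordinatewise[OF continuous_on_product_coordinates])
  then have "open ((\<lambda>S :: struc. S k (map v vs)) -` {b})"
    by (intro open_vimage) (auto simp: open_discrete)
  then show ?case by (simp add: vimage_def)
next
  case (QNot p)
  have "{S. eval_qf S v (QNot p) = b} = {S. eval_qf S v p = (\<not> b)}" by auto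
  then show ?case using QNot by simp
next
  case (QAnd p q)
  have "{S. eval_qf S v (QAnd p q) = b} = (if b
      then {S. eval_qf S v p = True} \<inter> {S. eval_qf S v q = True}
      else {S. eval_qf S v p = False} \<union> {S. eval_qf S v q = False})" by auto
  then show ?case using QAnd.IH[of True] QAnd.IH[of False] by auto
next
  case (QOr p q)
  have "{S. eval_qf S v (QOr p q) = b} = (if b
      then {S. eval_qf S v p = True} \<union> {S. eval_qf S v q = True}
      else {S. eval_qf S v p = False} \<inter> {S. eval_qf S v q = False})" by auto
  then show ?case using QOr.IH[of True] QOr.IH[of False] by auto
qed auto

lemma continuous_on_eval_qf: "continuous_on X (\<lambda>S :: struc. eval_qf S v \<psi>)"
  unfolding continuous_on_open_invariant
proof (intro allI impI)
  fix B :: "bool set"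
  have "(\<lambda>S. eval_qf S v \<psi>) -` B = (\<Union>b\<in>B. {S. eval_qf S v \<psi> = b})" by auto
  then show "\<exists>U. open U \<and> U \<inter> X = (\<lambda>S. eval_qf S v \<psi>) -` B \<inter> X"
    using open_eval_qf by (intro exI[of _ "\<Union>b\<in>B. {S. eval_qf S v \<psi> = b}"]) auto
qed

subsection \<open>Learning from distinct theories\<close>

fun var_bound :: "qf \<Rightarrow> nat" where
  "var_bound QTrue = 0"
| "var_bound (QEq i j) = max i j + 1"
| "var_bound (QRel k vs) = sum_list vs + 1"
| "var_bound (QNot p) = var_bound p"
| "var_bound (QAnd p q) = max (var_bound p) (var_bound q)"
| "var_bound (QOr p q) = max (var_bound p) (var_bound q)"

lemma eval_qf_cong_var_bound:
  "(\<And>i. i < var_bound \<psi> \<Longrightarrow> v i = w i) \<Longrightarrow> eval_qf S v \<psi> = eval_qf S w \<psi>"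
proof (induction \<psi>)
  case (QRel k vs)
  then have "\<forall>x\<in>set vs. v x = w x"
    using member_le_sum_list[of _ vs] by fastforce
  then show ?case by (simp cong: map_cong)
qed auto

text \<open>The code \<open>m\<close> is read as a formula with an initial segment of an assignment; on failure
  the learner outputs \<open>QTrue\<close>, which every structure satisfies.\<close>
definition qf_learner :: "struc \<Rightarrow> nat \<Rightarrow> nat" where
  "qf_learner S m = (case from_nat m :: qf \<times> nat list of (\<psi>, ys) \<Rightarrow>
     if eval_qf S (nth_default 0 ys) \<psi> then to_nat \<psi> else to_nat QTrue)"

lemma range_qf_learner: "range (qf_learner S) = to_nat ` satisfiable_qfs S"
proof
  show "range (qf_learner S) \<subseteq> to_nat ` satisfiable_qfs S"
  proof
    fix y assume "y \<in> range (qf_learner S)"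
    then obtain m \<psi> ys where "y = qf_learner S m" and m: "from_nat m = (\<psi> :: qf, ys :: nat list)"
      by (metis prod.exhaust rangeE)
    moreover have "QTrue \<in> satisfiable_qfs S" unfolding satisfiable_qfs_def by simp
    ultimately show "y \<in> to_nat ` satisfiable_qfs S"
      unfolding qf_learner_def by (auto simp: satisfiable_qfs_def)
  qed
next
  show "to_nat ` satisfiable_qfs S \<subseteq> range (qf_learner S)"
  proof
    fix y assume "y \<in> to_nat ` satisfiable_qfs S"
    then obtain \<psi> v where y: "y = to_nat \<psi>" and "eval_qf S v \<psi>"
      unfolding satisfiable_qfs_def by blast
    define ys where "ys = map v [0..<var_bound \<psi>]"
    have "eval_qf S (nth_default 0 ys) \<psi>"
      using \<open>eval_qf S v \<psi>\<close> eval_qf_cong_var_bound[of \<psi> "nth_default 0 ys" v S]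
      by (simp add: nth_default_def ys_def)
    then have "qf_learner S (to_nat (\<psi>, ys)) = y" unfolding qf_learner_def y by simp
    then show "y \<in> range (qf_learner S)" by (metis rangeI)
  qed
qed

lemma continuous_on_qf_learner: "continuous_on X qf_learner"
proof (rule continuous_on_coordinatewise_then_product)
  fix m
  obtain \<psi> ys where m: "from_nat m = (\<psi> :: qf, ys :: nat list)" by (metis prod.exhaust)
  have "continuous_on X (\<lambda>S. (\<lambda>b. if b then to_nat \<psi> else to_nat QTrue) (eval_qf S (nth_default 0 ys) \<psi>))"
    by (rule continuous_on_compose2[OF Topological_Spaces.continuous_on_discrete continuous_on_eval_qf]) auto
  then show "continuous_on X (\<lambda>S. qf_learner S m)"
    unfolding qf_learner_def m by simp
qed

lemma E_range_learnable_if_Th_sigma1_distinct: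
  assumes distinct: "\<forall>i j. i \<noteq> j \<longrightarrow> Th_sigma1 sig (A i) \<noteq> Th_sigma1 sig (A j)"
  shows "E_learnable (E_range :: (nat \<Rightarrow> nat) \<Rightarrow> (nat \<Rightarrow> nat) \<Rightarrow> bool) sig A"
  unfolding E_learnable_def
proof (intro exI conjI ballI)
  show "continuous_on (LD sig A) qf_learner" by (rule continuous_on_qf_learner)
  fix S T assume "S \<in> LD sig A" "T \<in> LD sig A"
  then obtain a b where a: "iso S (A a)" and b: "iso T (A b)" unfolding LD_def by blast
  show "iso S T \<longleftrightarrow> E_range (qf_learner S) (qf_learner T)"
  proof
    assume "E_range (qf_learner S) (qf_learner T)"
    then have "satisfiable_qfs S = satisfiable_qfs T"
      unfolding E_range_def range_qf_learner by (simp add: inj_image_eq_iff)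
    then have "Th_sigma1 sig (A a) = Th_sigma1 sig (A b)"
      using satisfiable_qfs_iso[OF a] satisfiable_qfs_iso[OF b]
      by (simp add: Th_sigma1_satisfiable_qfs)
    then have "a = b" using distinct by blast
    then show "iso S T" using a b iso_sym iso_trans by blast
  qed (simp add: E_range_def range_qf_learner satisfiable_qfs_iso)
qed

subsection \<open>Learners cannot separate equal theories\<close>

fun conjs :: "qf list \<Rightarrow> qf" where
  "conjs [] = QTrue"
| "conjs (p # ps) = QAnd p (conjs ps)"

lemma eval_conjs: "eval_qf S v (conjs ps) \<longleftrightarrow> (\<forall>p\<in>set ps. eval_qf S v p)"
  by (induction ps) auto

lemma wf_conjs: "wf_qf sig (conjs ps) \<longleftrightarrow> (\<forall>p\<in>set ps. wf_qf sig p)"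
  by (induction ps) auto

definition distinct_qf :: "nat \<Rightarrow> qf" where
  "distinct_qf n = conjs [QNot (QEq a b). (a, b) \<leftarrow> List.product [0..<n] [0..<n], a \<noteq> b]"

definition literal_qf :: "struc \<Rightarrow> nat \<Rightarrow> nat list \<Rightarrow> qf" where
  "literal_qf S k t = (if S k t then QRel k t else QNot (QRel k t))"

text \<open>The atomic diagram of \<open>S\<close> restricted to \<open>{0..<n}\<close>, with variable \<open>i\<close> naming \<open>i\<close>.\<close>
definition diagram_qf :: "nat list \<Rightarrow> struc \<Rightarrow> nat \<Rightarrow> qf" where
  "diagram_qf sig S n = QAnd (distinct_qf n)
     (conjs [literal_qf S k t. k \<leftarrow> [0..<length sig], t \<leftarrow> List.n_lists (sig ! k) [0..<n]])"

lemma eval_distinct_qf: "eval_qf T w (distinct_qf n) \<longleftrightarrow> inj_on w {..<n}"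
  unfolding distinct_qf_def eval_conjs inj_on_def by (auto simp: atLeast0LessThan)

lemma eval_diagram_qf:
  "eval_qf T w (diagram_qf sig S n) \<longleftrightarrow> inj_on w {..<n} \<and>
     (\<forall>k < length sig. \<forall>t. length t = sig ! k \<longrightarrow> set t \<subseteq> {..<n} \<longrightarrow> T k (map w t) = S k t)"
proof -
  have "eval_qf T w (literal_qf S k t) \<longleftrightarrow> T k (map w t) = S k t" for k t
    by (simp add: literal_qf_def)
  then show ?thesis
    unfolding diagram_qf_def eval_qf.simps eval_distinct_qf eval_conjs
    by (auto simp: set_n_lists atLeast0LessThan)
qed

lemma wf_diagram_qf: "wf_qf sig (diagram_qf sig S n)"
  unfolding diagram_qf_def distinct_qf_def wf_qf.simps wf_conjs
  by (fastforce simp: literal_qf_def dest: length_n_lists_elem)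

lemma inj_on_finite_extends_to_bij:
  fixes v :: "'a::countable \<Rightarrow> 'a"
  assumes "infinite (UNIV :: 'a set)" "finite F" "inj_on v F"
  obtains f where "bij f" "\<And>x. x \<in> F \<Longrightarrow> f x = v x"
proof -
  have "infinite (- F)" "infinite (- v ` F)"
    using assms by (auto simp: Compl_eq_Diff_UNIV)
  then have "bij_betw (from_nat_into (- v ` F) \<circ> to_nat_on (- F)) (- F) (- v ` F)"
    by (blast intro: bij_betw_trans to_nat_on_infinite bij_betw_from_nat_into)
  from bij_betw_disjoint_Un[OF inj_on_imp_bij_betw[OF assms(3)] this]
  have "bij (\<lambda>x. if x \<in> F then v x else (from_nat_into (- v ` F) \<circ> to_nat_on (- F)) x)"
    by simp
  then show ?thesis by (rule that) simp
qed

text \<open>The diagram of \<open>S\<close> on \<open>{0..<n}\<close> is a \<open>\<Sigma>\<^sup>inf\<^sub>1\<close> sentence true in \<open>S\<close>, hence in \<open>T\<close>;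
  a witness for it, extended to a permutation, relabels \<open>T\<close> to agree with \<open>S\<close> below \<open>n\<close>.\<close>
lemma Th_sigma1_subset_obtains_local_copy:
  assumes S: "is_struc sig S" and T: "is_struc sig T"
    and Th: "Th_sigma1 sig S \<subseteq> Th_sigma1 sig T"
  obtains T' where "is_struc sig T'" "iso T' T" "\<And>k xs. set xs \<subseteq> {..<n} \<Longrightarrow> T' k xs = S k xs"
proof -
  have "eval_qf S id (diagram_qf sig S n)" by (simp add: eval_diagram_qf)
  then have "{diagram_qf sig S n} \<in> Th_sigma1 sig S"
    unfolding Th_sigma1_def sigma1_sentences_def sat_sigma1_def by (auto simp: wf_diagram_qf)
  with Th obtain w where "eval_qf T w (diagram_qf sig S n)"
    unfolding Th_sigma1_def sat_sigma1_def by auto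
  then have inj: "inj_on w {..<n}"
    and agree: "\<And>k t. k < length sig \<Longrightarrow> length t = sig ! k \<Longrightarrow> set t \<subseteq> {..<n} \<Longrightarrow>
      T k (map w t) = S k t"
    by (auto simp: eval_diagram_qf)
  obtain f where f: "bij f" "\<And>x. x \<in> {..<n} \<Longrightarrow> f x = w x"
    using inj_on_finite_extends_to_bij[OF infinite_UNIV_nat finite_lessThan inj] by blast
  define T' where "T' k xs = T k (map f xs)" for k xs
  show ?thesis
  proof
    show "is_struc sig T'" using T unfolding is_struc_def T'_def by (metis length_map)
    show "iso T' T" unfolding iso_def T'_def using f(1) by blast
    fix k xs assume xs: "set xs \<subseteq> {..<n}"
    then have "map f xs = map w xs" using f(2) by (intro map_cong) auto
    then have "T' k xs = T k (map w xs)" unfolding T'_def by (rule arg_cong)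
    then show "T' k xs = S k xs"
      using agree[OF _ _ xs] S T unfolding is_struc_def by (metis length_map)
  qed
qed

lemma tendsto_struc_if_agree_below:
  fixes T :: "nat \<Rightarrow> struc"
  assumes "\<And>n k xs. set xs \<subseteq> {..<n} \<Longrightarrow> T n k xs = S k xs"
  shows "(T \<longlongrightarrow> S) sequentially"
  unfolding tendsto_fun_iff
proof (intro allI)
  fix k xs
  have "\<forall>\<^sub>F n in sequentially. T n k xs = S k xs"
    unfolding eventually_sequentially
  proof (intro exI allI impI)
    fix n assume "Suc (sum_list xs) \<le> n"
    then have "set xs \<subseteq> {..<n}" using member_le_sum_list[of _ xs] by fastforce
    then show "T n k xs = S k xs" by (rule assms)
  qed
  then show "((\<lambda>n. T n k xs) \<longlongrightarrow> S k xs) sequentially" by (simp add: tendsto_discrete)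
qed

lemma learner_range_mono_Th_sigma1:
  fixes \<Gamma> :: "struc \<Rightarrow> nat \<Rightarrow> nat"
  assumes cont: "continuous_on (LD sig A) \<Gamma>"
    and invariant: "\<And>S T. S \<in> LD sig A \<Longrightarrow> T \<in> LD sig A \<Longrightarrow> iso S T \<Longrightarrow> range (\<Gamma> S) = range (\<Gamma> T)"
    and S: "S \<in> LD sig A" and T: "T \<in> LD sig A"
    and Th: "Th_sigma1 sig S \<subseteq> Th_sigma1 sig T"
  shows "range (\<Gamma> S) \<subseteq> range (\<Gamma> T)"
proof -
  have "is_struc sig S" "is_struc sig T" using S T unfolding LD_def by auto
  then have "\<forall>n. \<exists>T'. is_struc sig T' \<and> iso T' T \<and> (\<forall>k xs. set xs \<subseteq> {..<n} \<longrightarrow> T' k xs = S k xs)"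
    using Th_sigma1_subset_obtains_local_copy[OF _ _ Th] by metis
  then obtain Ts where Ts: "\<And>n. is_struc sig (Ts n)" "\<And>n. iso (Ts n) T"
    and agree: "\<And>n k xs. set xs \<subseteq> {..<n} \<Longrightarrow> Ts n k xs = S k xs"
    by metis
  have LD: "Ts n \<in> LD sig A" for n
    using T Ts iso_trans unfolding LD_def by blast
  have "((\<lambda>n. \<Gamma> (Ts n)) \<longlongrightarrow> \<Gamma> S) sequentially"
    using tendsto_struc_if_agree_below[OF agree] LD
    by (intro continuous_on_tendsto_compose[OF cont _ S]) auto
  then have "range (\<Gamma> S) \<subseteq> (\<Union>n. range (\<Gamma> (Ts n)))"
    by (rule range_subset_UN_range_if_tendsto)
  also have "\<dots> = range (\<Gamma> T)"
    using invariant[OF LD T Ts(2)] by simp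
  finally show ?thesis .
qed

theorem mainTheorem6:
  fixes sig :: "nat list" and A :: "nat \<Rightarrow> struc"
  assumes "is_family sig A"
  shows "E_learnable (E_range :: (nat \<Rightarrow> nat) \<Rightarrow> (nat \<Rightarrow> nat) \<Rightarrow> bool) sig A \<longleftrightarrow>
         (\<forall>i j. i \<noteq> j \<longrightarrow> Th_sigma1 sig (A i) \<noteq> Th_sigma1 sig (A j))"
proof
  assume "E_learnable (E_range :: (nat \<Rightarrow> nat) \<Rightarrow> (nat \<Rightarrow> nat) \<Rightarrow> bool) sig A"
  then obtain \<Gamma> :: "struc \<Rightarrow> nat \<Rightarrow> nat" where cont: "continuous_on (LD sig A) \<Gamma>"
    and learns: "\<forall>S\<in>LD sig A. \<forall>T\<in>LD sig A. iso S T \<longleftrightarrow> range (\<Gamma> S) = range (\<Gamma> T)"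
    unfolding E_learnable_def E_range_def by blast
  have A: "A i \<in> LD sig A" for i
    using assms iso_refl unfolding is_family_def LD_def by blast
  note mono = learner_range_mono_Th_sigma1[OF cont _ A A]
  show "\<forall>i j. i \<noteq> j \<longrightarrow> Th_sigma1 sig (A i) \<noteq> Th_sigma1 sig (A j)"
  proof (intro allI impI notI)
    fix i j assume "i \<noteq> j" and Th: "Th_sigma1 sig (A i) = Th_sigma1 sig (A j)"
    have "range (\<Gamma> (A i)) = range (\<Gamma> (A j))"
      using mono[of i j] mono[of j i] learns Th by blast
    then have "iso (A i) (A j)" using learns A by blast
    with \<open>i \<noteq> j\<close> assms show False unfolding is_family_def by blast
  qed
qed (rule E_range_learnable_if_Th_sigma1_distinct)

end
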